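(* Let $\omega=\frac{-1+\sqrt{-3}}{2}$. For $k=1,2,3$ let $C_k\subset\mathbf{C}^2$ be the affine curve $y_k^2=x_k^3-1$ and $g_k(x_k,y_k)=(\omega x_k,-y_k)$. Let $V=C_1\times C_2\times C_3$, $g=g_1\times g_2\times g_3$, and $W=V/\langle g\rangle$. Then the affine coordinate ring $\mathbf{C}[W]$ is the subring $$R=\mathbf{C}[y_1^2,y_2^2,y_3^2,y_1y_2,y_2y_3,y_3y_1,\ x_1^ix_2^jx_3^k\ (0\le i,j,k\le 2,\ i+j+k=3)]$$ of the ring $\tilde R=\mathbf{C}[y_1,y_2,y_3,x_1,x_2,x_3]/(y_1^2-x_1^3+1,\ y_2^2-x_2^3+1,\ y_3^2-x_3^3+1)$.
   Context: $\tilde R$ is the affine coordinate ring of $V$, and $\mathbf{C}[W]$ is identified with the invariant subring $\tilde R^{g}$. *)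

theory Defs
  imports Complex_Main
begin

datatype var = X1 | X2 | X3 | Y1 | Y2 | Y3

type_synonym pt = "var \<Rightarrow> complex"

inductive_set gen_alg :: "(pt \<Rightarrow> complex) set \<Rightarrow> (pt \<Rightarrow> complex) set"
  for S :: "(pt \<Rightarrow> complex) set" where
  gen: "f \<in> S \<Longrightarrow> f \<in> gen_alg S"
| const: "(\<lambda>_. c) \<in> gen_alg S"
| add: "f \<in> gen_alg S \<Longrightarrow> h \<in> gen_alg S \<Longrightarrow> (\<lambda>p. f p + h p) \<in> gen_alg S"
| mult: "f \<in> gen_alg S \<Longrightarrow> h \<in> gen_alg S \<Longrightarrow> (\<lambda>p. f p * h p) \<in> gen_alg S"

definition poly_funs :: "(pt \<Rightarrow> complex) set" where
  "poly_funs = gen_alg {(\<lambda>p. p v) | v. True}"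

definition omega :: complex where
  "omega = (-1 + \<i> * complex_of_real (sqrt 3)) / 2"

definition V :: "pt set" where
  "V = {p. p Y1 ^ 2 = p X1 ^ 3 - 1 \<and> p Y2 ^ 2 = p X2 ^ 3 - 1 \<and> p Y3 ^ 2 = p X3 ^ 3 - 1}"

definition gmap :: "pt \<Rightarrow> pt" where
  "gmap p = (\<lambda>v. case v of X1 \<Rightarrow> omega * p X1 | X2 \<Rightarrow> omega * p X2 | X3 \<Rightarrow> omega * p X3
                         | Y1 \<Rightarrow> - p Y1 | Y2 \<Rightarrow> - p Y2 | Y3 \<Rightarrow> - p Y3)"

definition R_gens :: "(pt \<Rightarrow> complex) set" where
  "R_gens =
     {(\<lambda>p. p Y1 ^ 2), (\<lambda>p. p Y2 ^ 2), (\<lambda>p. p Y3 ^ 2),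
      (\<lambda>p. p Y1 * p Y2), (\<lambda>p. p Y2 * p Y3), (\<lambda>p. p Y3 * p Y1)}
   \<union> {(\<lambda>p. p X1 ^ i * p X2 ^ j * p X3 ^ k) | i j k.
        i \<le> 2 \<and> j \<le> 2 \<and> k \<le> 2 \<and> i + j + k = 3}"

end

theory Submission
  imports Defs
begin

text \<open>
  The map g has order 6 and acts diagonally on C[V]: modulo the equations of V, every
  polynomial is a sum of components F (a, b) with a < 3, b < 2, where F (a, b) is an
  R-linear combination of products of an x-monomial of degree a and a y-monomial of degree b.
  Such products multiply correctly because every cubic x-monomial lies in R
  (x_k^3 = y_k^2 + 1 on V) and every quadratic y-monomial is a generator of R. Hence g scales
  F (a, b) by the character omega^a (-1)^b, and averaging a g-invariant polynomial over the
  orbit of g leaves only the component F (0, 0), which lies in R.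
\<close>

lemma omega_sq: "omega\<^sup>2 = - 1 - omega"
  unfolding omega_def by (simp add: complex_eq_iff power2_eq_square field_simps)

lemma omega_cube: "omega ^ 3 = 1"
proof -
  have "omega ^ 3 = omega * omega\<^sup>2" by (simp add: power3_eq_cube power2_eq_square)
  also have "\<dots> = omega * (- 1 - omega)" by (simp add: omega_sq)
  also have "\<dots> = - omega - omega\<^sup>2" by (simp add: algebra_simps power2_eq_square)
  also have "\<dots> = 1" by (simp add: omega_sq)
  finally show ?thesis .
qed

lemma gmap_in_V: "p \<in> V \<Longrightarrow> gmap p \<in> V"
  unfolding V_def gmap_def by (simp add: power_mult_distrib omega_cube)

lemma funpow_gmap_in_V: "p \<in> V \<Longrightarrow> (gmap ^^ k) p \<in> V"
  by (induction k) (auto simp: gmap_in_V)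

lemma R_gens_gmap_invariant:
  assumes "f \<in> R_gens"
  shows "f (gmap p) = f p"
  using assms unfolding R_gens_def
proof (elim UnE CollectE exE conjE)
  fix i j k assume f: "f = (\<lambda>p. p X1 ^ i * p X2 ^ j * p X3 ^ k)" and "i + j + k = 3"
  then have "omega ^ i * omega ^ j * omega ^ k = 1" by (metis power_add omega_cube)
  then show ?thesis
    unfolding f gmap_def by (simp add: power_mult_distrib algebra_simps)
qed (auto simp: gmap_def)

lemma gen_alg_R_gens_gmap_invariant: "f \<in> gen_alg R_gens \<Longrightarrow> f (gmap p) = f p"
  by (induction rule: gen_alg.induct) (auto simp: R_gens_gmap_invariant)

text \<open>The image of R in C[V]: functions are identified when they agree on V.\<close>
definition R_on_V :: "(pt \<Rightarrow> complex) set" where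
  "R_on_V = {f. \<exists>h\<in>gen_alg R_gens. \<forall>p\<in>V. f p = h p}"

lemma R_on_V_gen: "f \<in> R_gens \<Longrightarrow> f \<in> R_on_V"
  unfolding R_on_V_def using gen_alg.gen by blast

lemma R_on_V_const: "(\<lambda>_. c) \<in> R_on_V"
  unfolding R_on_V_def mem_Collect_eq
  by (rule bexI[where x = "\<lambda>_. c"]) (auto intro: gen_alg.const)

lemma R_on_V_add: "f \<in> R_on_V \<Longrightarrow> h \<in> R_on_V \<Longrightarrow> (\<lambda>p. f p + h p) \<in> R_on_V"
  unfolding R_on_V_def by (auto 0 3 intro: gen_alg.add)

lemma R_on_V_mult: "f \<in> R_on_V \<Longrightarrow> h \<in> R_on_V \<Longrightarrow> (\<lambda>p. f p * h p) \<in> R_on_V"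
  unfolding R_on_V_def by (auto 0 3 intro: gen_alg.mult)

lemma R_on_V_cong: "f \<in> R_on_V \<Longrightarrow> (\<And>p. p \<in> V \<Longrightarrow> h p = f p) \<Longrightarrow> h \<in> R_on_V"
  unfolding R_on_V_def by auto

lemma R_on_V_gmap_invariant: "h \<in> R_on_V \<Longrightarrow> p \<in> V \<Longrightarrow> h (gmap p) = h p"
  unfolding R_on_V_def using gen_alg_R_gens_gmap_invariant gmap_in_V by fastforce

lemma R_on_V_y_quadratic:
  assumes "u \<in> {Y1, Y2, Y3}" "v \<in> {Y1, Y2, Y3}"
  shows "(\<lambda>p. p u * p v) \<in> R_on_V"
proof -
  have "(\<lambda>p. p Y1 ^ 2) \<in> R_on_V" "(\<lambda>p. p Y2 ^ 2) \<in> R_on_V" "(\<lambda>p. p Y3 ^ 2) \<in> R_on_V"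
    "(\<lambda>p. p Y1 * p Y2) \<in> R_on_V" "(\<lambda>p. p Y2 * p Y3) \<in> R_on_V" "(\<lambda>p. p Y3 * p Y1) \<in> R_on_V"
    by (rule R_on_V_gen; simp add: R_gens_def)+
  then show ?thesis
    using assms by (auto simp: power2_eq_square ac_simps)
qed

lemma R_on_V_x_cube:
  assumes "u \<in> {X1, X2, X3}"
  shows "(\<lambda>p. p u ^ 3) \<in> R_on_V"
proof -
  obtain w where w: "w \<in> {Y1, Y2, Y3}" "\<forall>p\<in>V. p w ^ 2 = p u ^ 3 - 1"
    using assms unfolding V_def by auto
  show ?thesis
    using R_on_V_add[OF R_on_V_y_quadratic[OF w(1) w(1)] R_on_V_const[of 1]]
    by (rule R_on_V_cong) (use w(2) in \<open>simp add: power2_eq_square\<close>)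
qed

lemma R_on_V_x_monomial:
  assumes "i + j + k = 3"
  shows "(\<lambda>p. p X1 ^ i * p X2 ^ j * p X3 ^ k) \<in> R_on_V"
proof (cases "i \<le> 2 \<and> j \<le> 2 \<and> k \<le> 2")
  case True
  then show ?thesis using assms by (intro R_on_V_gen) (auto simp: R_gens_def)
next
  case False
  then consider "i = 3" "j = 0" "k = 0" | "i = 0" "j = 3" "k = 0" | "i = 0" "j = 0" "k = 3"
    using assms by linarith
  then show ?thesis by cases (use R_on_V_x_cube in auto)
qed

text \<open>The R-submodule of C[V] spanned by B, with functions identified when they agree on V.\<close>
inductive_set R_span :: "(pt \<Rightarrow> complex) set \<Rightarrow> (pt \<Rightarrow> complex) set" for B where
  base: "m \<in> B \<Longrightarrow> m \<in> R_span B"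
| zero: "(\<lambda>_. 0) \<in> R_span B"
| add: "f \<in> R_span B \<Longrightarrow> h \<in> R_span B \<Longrightarrow> (\<lambda>p. f p + h p) \<in> R_span B"
| smult: "h \<in> R_on_V \<Longrightarrow> f \<in> R_span B \<Longrightarrow> (\<lambda>p. h p * f p) \<in> R_span B"
| cong: "f \<in> R_span B \<Longrightarrow> (\<And>p. p \<in> V \<Longrightarrow> f' p = f p) \<Longrightarrow> f' \<in> R_span B"

lemma R_span_sum:
  "finite A \<Longrightarrow> (\<And>i. i \<in> A \<Longrightarrow> F i \<in> R_span B) \<Longrightarrow> (\<lambda>p. \<Sum>i\<in>A. F i p) \<in> R_span B"
proof (induction A rule: finite_induct)
  case empty
  then show ?case by (simp add: R_span.zero)
next
  case (insert x A)
  then show ?case using R_span.add[of "F x" B "\<lambda>p. \<Sum>i\<in>A. F i p"] by simp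
qed

lemma R_span_mult_base:
  assumes "f' \<in> R_span B'" "b \<in> B" "\<forall>b\<in>B. \<forall>b'\<in>B'. (\<lambda>p. b p * b' p) \<in> R_span C"
  shows "(\<lambda>p. b p * f' p) \<in> R_span C"
  using assms(1)
proof (induction rule: R_span.induct)
  case (base m)
  then show ?case using assms by blast
next
  case zero
  then show ?case by (simp add: R_span.zero)
next
  case (add f h)
  then show ?case using R_span.add[OF add.IH] by (simp add: distrib_left)
next
  case (smult h f)
  then show ?case using R_span.smult[OF smult.hyps(1) smult.IH] by (simp add: mult.left_commute)
next
  case (cong f f')
  then show ?case by (intro R_span.cong[OF cong.IH]) simp
qed

lemma R_span_mult:
  assumes "f \<in> R_span B" "f' \<in> R_span B'" "\<forall>b\<in>B. \<forall>b'\<in>B'. (\<lambda>p. b p * b' p) \<in> R_span C"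
  shows "(\<lambda>p. f p * f' p) \<in> R_span C"
  using assms(1)
proof (induction rule: R_span.induct)
  case (base m)
  then show ?case using R_span_mult_base assms by blast
next
  case zero
  then show ?case by (simp add: R_span.zero)
next
  case (add f h)
  then show ?case using R_span.add[OF add.IH] by (simp add: distrib_right)
next
  case (smult h f)
  then show ?case using R_span.smult[OF smult.hyps(1) smult.IH] by (simp add: mult.assoc)
next
  case (cong f f')
  then show ?case by (intro R_span.cong[OF cong.IH]) simp
qed

lemma R_span_eigenvector:
  assumes "f \<in> R_span B" "\<And>m p. m \<in> B \<Longrightarrow> p \<in> V \<Longrightarrow> m (gmap p) = c * m p" "p \<in> V"
  shows "f (gmap p) = c * f p"
  using assms(1,3)
proof (induction arbitrary: p rule: R_span.induct)
  case (base m)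
  then show ?case using assms(2) by blast
next
  case zero
  then show ?case by simp
next
  case (add f h)
  then show ?case by (simp add: distrib_left)
next
  case (smult h f)
  then show ?case using R_on_V_gmap_invariant by (simp add: mult.left_commute)
next
  case (cong f f')
  then show ?case using gmap_in_V by simp
qed

lemma R_span_one: "f \<in> R_span {\<lambda>_. 1} \<Longrightarrow> f \<in> R_on_V"
proof (induction rule: R_span.induct)
  case (base m)
  then show ?case using R_on_V_const by simp
next
  case zero
  then show ?case using R_on_V_const .
next
  case (add f h)
  show ?case by (rule R_on_V_add[OF add.IH])
next
  case (smult h f)
  show ?case by (rule R_on_V_mult[OF smult.hyps(1) smult.IH])
next
  case (cong f f')
  then show ?case using R_on_V_cong by blast
qed

definition monomials :: "var set \<Rightarrow> nat \<Rightarrow> (pt \<Rightarrow> complex) set" where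
  "monomials S d = {(\<lambda>p. \<Prod>v\<leftarrow>vs. p v) | vs. length vs = d \<and> set vs \<subseteq> S}"

lemma monomials_0: "monomials S 0 = {\<lambda>_. 1}"
  by (auto simp: monomials_def)

lemma monomials_1: "v \<in> S \<Longrightarrow> (\<lambda>p. p v) \<in> monomials S 1"
  unfolding monomials_def by (auto intro!: exI[of _ "[v]"])

lemma monomials_mult:
  assumes "m \<in> monomials S d" "m' \<in> monomials S d'"
  shows "(\<lambda>p. m p * m' p) \<in> monomials S (d + d')"
proof -
  obtain vs vs' where "m = (\<lambda>p. \<Prod>v\<leftarrow>vs. p v)" "length vs = d" "set vs \<subseteq> S"
    "m' = (\<lambda>p. \<Prod>v\<leftarrow>vs'. p v)" "length vs' = d'" "set vs' \<subseteq> S"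
    using assms unfolding monomials_def by blast
  then show ?thesis unfolding monomials_def by (auto intro!: exI[of _ "vs @ vs'"])
qed

lemma monomials_gmap:
  assumes "m \<in> monomials S d" "\<And>v. v \<in> S \<Longrightarrow> gmap p v = c * p v"
  shows "m (gmap p) = c ^ d * m p"
proof -
  obtain vs where vs: "m = (\<lambda>p. \<Prod>v\<leftarrow>vs. p v)" "length vs = d" "set vs \<subseteq> S"
    using assms(1) unfolding monomials_def by blast
  have "(\<Prod>v\<leftarrow>vs. gmap p v) = c ^ length vs * (\<Prod>v\<leftarrow>vs. p v)" if "set vs \<subseteq> S" for vs
    using that by (induction vs) (auto simp: assms(2))
  then show ?thesis using vs by simp
qed

lemma monomials_reduce_degree:
  assumes "0 < e" "monomials S e \<subseteq> R_on_V" "m \<in> monomials S d"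
  shows "m \<in> R_span (monomials S (d mod e))"
  using assms(3)
proof (induction d arbitrary: m rule: less_induct)
  case (less d)
  show ?case
  proof (cases "d < e")
    case True
    then show ?thesis using less.prems by (simp add: R_span.base)
  next
    case False
    obtain vs where vs: "m = (\<lambda>p. \<Prod>v\<leftarrow>vs. p v)" "length vs = d" "set vs \<subseteq> S"
      using less.prems unfolding monomials_def by blast
    have split: "m p = (\<Prod>v\<leftarrow>take e vs. p v) * (\<Prod>v\<leftarrow>drop e vs. p v)" for p
      unfolding vs(1) by (simp flip: prod_list.append map_append)
    have "(\<lambda>p. \<Prod>v\<leftarrow>take e vs. p v) \<in> monomials S e"
      unfolding monomials_def using False vs(2,3)
      by (intro CollectI exI[of _ "take e vs"]) (auto dest: in_set_takeD)
    then have take: "(\<lambda>p. \<Prod>v\<leftarrow>take e vs. p v) \<in> R_on_V"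
      using assms(2) by blast
    have "(\<lambda>p. \<Prod>v\<leftarrow>drop e vs. p v) \<in> monomials S (d - e)"
      unfolding monomials_def using vs(2,3)
      by (intro CollectI exI[of _ "drop e vs"]) (auto dest: in_set_dropD)
    then have drop: "(\<lambda>p. \<Prod>v\<leftarrow>drop e vs. p v) \<in> R_span (monomials S (d mod e))"
      using False assms(1) less.IH[of "d - e"] by (simp add: le_mod_geq)
    show ?thesis
      by (rule R_span.cong[OF R_span.smult[OF take drop]]) (simp add: split)
  qed
qed

lemma prod_list_x_vars:
  fixes p :: "var \<Rightarrow> 'a::comm_monoid_mult"
  assumes "set vs \<subseteq> {X1, X2, X3}"
  shows "(\<Prod>v\<leftarrow>vs. p v) = p X1 ^ count_list vs X1 * p X2 ^ count_list vs X2 * p X3 ^ count_list vs X3"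
  using assms
proof (induction vs)
  case (Cons v vs)
  then consider "v = X1" | "v = X2" | "v = X3" by auto
  then show ?case using Cons by cases (simp_all add: ac_simps)
qed simp

lemma count_list_x_vars:
  "set vs \<subseteq> {X1, X2, X3} \<Longrightarrow> count_list vs X1 + count_list vs X2 + count_list vs X3 = length vs"
  by (induction vs) auto

lemma x_cubic_monomials_subset_R_on_V: "monomials {X1, X2, X3} 3 \<subseteq> R_on_V"
proof
  fix m assume "m \<in> monomials {X1, X2, X3} 3"
  then obtain vs where "m = (\<lambda>p. \<Prod>v\<leftarrow>vs. p v)" "length vs = 3" "set vs \<subseteq> {X1, X2, X3}"
    unfolding monomials_def by blast
  then show "m \<in> R_on_V"
    using R_on_V_x_monomial count_list_x_vars by (simp add: prod_list_x_vars)
qed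

lemma y_quadratic_monomials_subset_R_on_V: "monomials {Y1, Y2, Y3} 2 \<subseteq> R_on_V"
proof
  fix m assume "m \<in> monomials {Y1, Y2, Y3} 2"
  then obtain u v where "m = (\<lambda>p. p u * p v)" "u \<in> {Y1, Y2, Y3}" "v \<in> {Y1, Y2, Y3}"
    unfolding monomials_def by (auto simp: length_Suc_conv numeral_2_eq_2)
  then show "m \<in> R_on_V" using R_on_V_y_quadratic by simp
qed

definition weight_basis :: "nat \<Rightarrow> nat \<Rightarrow> (pt \<Rightarrow> complex) set" where
  "weight_basis a b = {(\<lambda>p. m p * n p) | m n. m \<in> monomials {X1, X2, X3} a \<and> n \<in> monomials {Y1, Y2, Y3} b}"

definition character :: "nat \<times> nat \<Rightarrow> complex" where
  "character w = omega ^ fst w * (-1) ^ snd w"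

lemma weight_basis_intro:
  "m \<in> monomials {X1, X2, X3} a \<Longrightarrow> n \<in> monomials {Y1, Y2, Y3} b \<Longrightarrow> (\<lambda>p. m p * n p) \<in> weight_basis a b"
  unfolding weight_basis_def by blast

lemma weight_basis_0_0: "weight_basis 0 0 = {\<lambda>_. 1}"
  by (auto simp: weight_basis_def monomials_0)

lemma weight_basis_gmap:
  assumes "m \<in> weight_basis a b"
  shows "m (gmap p) = character (a, b) * m p"
proof -
  obtain x y where "m = (\<lambda>p. x p * y p)" "x \<in> monomials {X1, X2, X3} a" "y \<in> monomials {Y1, Y2, Y3} b"
    using assms unfolding weight_basis_def by blast
  moreover have "x (gmap p) = omega ^ a * x p" if "x \<in> monomials {X1, X2, X3} a" for x
    by (rule monomials_gmap[OF that]) (auto simp: gmap_def)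
  moreover have "y (gmap p) = (-1) ^ b * y p" if "y \<in> monomials {Y1, Y2, Y3} b" for y
    by (rule monomials_gmap[OF that]) (auto simp: gmap_def)
  ultimately show ?thesis by (simp add: character_def mult_ac)
qed

lemma weight_basis_mult:
  assumes "m \<in> weight_basis a b" "m' \<in> weight_basis a' b'"
  shows "(\<lambda>p. m p * m' p) \<in> R_span (weight_basis ((a + a') mod 3) ((b + b') mod 2))"
proof -
  obtain x y x' y' where xy: "m = (\<lambda>p. x p * y p)" "m' = (\<lambda>p. x' p * y' p)"
    "x \<in> monomials {X1, X2, X3} a" "y \<in> monomials {Y1, Y2, Y3} b"
    "x' \<in> monomials {X1, X2, X3} a'" "y' \<in> monomials {Y1, Y2, Y3} b'"
    using assms unfolding weight_basis_def by blast
  have "(\<lambda>p. x p * x' p) \<in> R_span (monomials {X1, X2, X3} ((a + a') mod 3))"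
    using monomials_mult[OF xy(3,5)] x_cubic_monomials_subset_R_on_V by (intro monomials_reduce_degree) auto
  moreover have "(\<lambda>p. y p * y' p) \<in> R_span (monomials {Y1, Y2, Y3} ((b + b') mod 2))"
    using monomials_mult[OF xy(4,6)] y_quadratic_monomials_subset_R_on_V by (intro monomials_reduce_degree) auto
  ultimately have "(\<lambda>p. (x p * x' p) * (y p * y' p))
      \<in> R_span (weight_basis ((a + a') mod 3) ((b + b') mod 2))"
    by (rule R_span_mult) (auto intro: R_span.base weight_basis_intro)
  then show ?thesis unfolding xy by (simp add: mult_ac)
qed

lemma R_span_weight_mult:
  assumes "f \<in> R_span (weight_basis a b)" "f' \<in> R_span (weight_basis a' b')"
  shows "(\<lambda>p. f p * f' p) \<in> R_span (weight_basis ((a + a') mod 3) ((b + b') mod 2))"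
  using R_span_mult[OF assms] weight_basis_mult by blast

lemma R_span_weight_funpow_gmap:
  assumes "f \<in> R_span (weight_basis a b)" "p \<in> V"
  shows "f ((gmap ^^ k) p) = character (a, b) ^ k * f p"
proof (induction k)
  case 0
  then show ?case by simp
next
  case (Suc k)
  have "f ((gmap ^^ Suc k) p) = character (a, b) * f ((gmap ^^ k) p)"
    using R_span_eigenvector[OF assms(1) weight_basis_gmap funpow_gmap_in_V[OF assms(2)]]
    by simp
  then show ?case using Suc by simp
qed

definition weights :: "(nat \<times> nat) set" where
  "weights = {..<3} \<times> {..<2}"

definition weight_add :: "nat \<times> nat \<Rightarrow> nat \<times> nat \<Rightarrow> nat \<times> nat" where
  "weight_add u v = ((fst u + fst v) mod 3, (snd u + snd v) mod 2)"

lemma finite_weights: "finite weights"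
  by (simp add: weights_def)

lemma weight_add_in_weights: "weight_add u v \<in> weights"
  by (simp add: weight_add_def weights_def)

definition weight_decomposition :: "(nat \<times> nat \<Rightarrow> pt \<Rightarrow> complex) \<Rightarrow> (pt \<Rightarrow> complex) \<Rightarrow> bool" where
  "weight_decomposition F f \<longleftrightarrow>
     (\<forall>w\<in>weights. F w \<in> R_span (weight_basis (fst w) (snd w))) \<and> (\<forall>p. f p = (\<Sum>w\<in>weights. F w p))"

lemma weight_decomposition_single:
  assumes "f \<in> R_span (weight_basis a b)" "(a, b) \<in> weights"
  shows "weight_decomposition (\<lambda>w p. if w = (a, b) then f p else 0) f"
proof -
  have "(\<lambda>p. if w = (a, b) then f p else 0) \<in> R_span (weight_basis (fst w) (snd w))" for w
    using assms(1) R_span.zero by (cases "w = (a, b)") auto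
  moreover have "f p = (\<Sum>w\<in>weights. if w = (a, b) then f p else 0)" for p
    using assms(2) finite_weights by simp
  ultimately show ?thesis unfolding weight_decomposition_def by auto
qed

lemma weight_decomposition_add:
  assumes "weight_decomposition F f" "weight_decomposition G h"
  shows "weight_decomposition (\<lambda>w p. F w p + G w p) (\<lambda>p. f p + h p)"
  using assms unfolding weight_decomposition_def by (auto simp: sum.distrib intro: R_span.add)

lemma weight_decomposition_mult:
  assumes F: "weight_decomposition F f" and G: "weight_decomposition G h"
  shows "\<exists>H. weight_decomposition H (\<lambda>p. f p * h p)"
proof -
  define H where
    "H w p = (\<Sum>(u, v)\<in>weights \<times> weights. if weight_add u v = w then F u p * G v p else 0)" for w p
  have "H w \<in> R_span (weight_basis (fst w) (snd w))" for w
  proof -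
    have "(\<lambda>p. if weight_add u v = w then F u p * G v p else 0) \<in> R_span (weight_basis (fst w) (snd w))"
      if "u \<in> weights" "v \<in> weights" for u v
    proof (cases "weight_add u v = w")
      case True
      then show ?thesis
        using that F G R_span_weight_mult[of "F u" "fst u" "snd u" "G v" "fst v" "snd v"]
        unfolding weight_decomposition_def weight_add_def by auto
    qed (simp add: R_span.zero)
    then show ?thesis
      unfolding H_def[abs_def] by (intro R_span_sum) (auto simp: finite_weights)
  qed
  moreover have "f p * h p = (\<Sum>w\<in>weights. H w p)" for p
  proof -
    have "f p * h p = (\<Sum>(u, v)\<in>weights \<times> weights. F u p * G v p)"
      using F G unfolding weight_decomposition_def by (simp add: sum_product sum.cartesian_product)
    also have "\<dots> = (\<Sum>w\<in>weights. H w p)"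
      unfolding H_def by (subst sum.swap) (simp add: weight_add_in_weights finite_weights case_prod_unfold)
    finally show ?thesis .
  qed
  ultimately show ?thesis unfolding weight_decomposition_def by blast
qed

lemma poly_funs_weight_decomposition:
  assumes "f \<in> poly_funs"
  shows "\<exists>F. weight_decomposition F f"
  using assms unfolding poly_funs_def
proof (induction rule: gen_alg.induct)
  case (gen f)
  then obtain v where f: "f = (\<lambda>p. p v)" by blast
  have "(\<lambda>p. p v * 1) \<in> weight_basis 1 0 \<or> (\<lambda>p. 1 * p v) \<in> weight_basis 0 1"
  proof (cases "v \<in> {X1, X2, X3}")
    case True
    then show ?thesis
      using weight_basis_intro[OF monomials_1[OF True], of "\<lambda>_. 1"] by (simp add: monomials_0)
  next
    case False
    then have "v \<in> {Y1, Y2, Y3}" by (cases v) auto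
    then show ?thesis
      using weight_basis_intro[of "\<lambda>_. 1", OF _ monomials_1] by (simp add: monomials_0)
  qed
  then have "f \<in> weight_basis 1 0 \<or> f \<in> weight_basis 0 1" by (simp add: f)
  then show ?case
    using weight_decomposition_single R_span.base by (fastforce simp: weights_def)
next
  case (const c)
  have "(\<lambda>_. c) \<in> R_span (weight_basis 0 0)"
    using R_span.smult[OF R_on_V_const R_span.base[of "\<lambda>_. 1"]] by (simp add: weight_basis_0_0)
  then show ?case
    using weight_decomposition_single by (fastforce simp: weights_def)
next
  case (add f h)
  then show ?case using weight_decomposition_add by blast
next
  case (mult f h)
  then show ?case using weight_decomposition_mult by blast
qed

lemma character_pow_6: "character w ^ 6 = 1"
proof -
  have "character w ^ 6 = (omega ^ 3) ^ (2 * fst w) * ((-1) ^ 6) ^ snd w"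
    unfolding character_def by (simp add: power_mult_distrib ac_simps flip: power_mult)
  then show ?thesis by (simp add: omega_cube)
qed

lemma character_eq_1_iff: "w \<in> weights \<Longrightarrow> character w = 1 \<longleftrightarrow> w = (0, 0)"
proof -
  assume "w \<in> weights"
  then consider "w = (0, 0)" | "w = (0, 1)" | "w = (1, 0)" | "w = (1, 1)" | "w = (2, 0)" | "w = (2, 1)"
    unfolding weights_def by (cases w) (auto simp: less_Suc_eq numeral_3_eq_3 numeral_2_eq_2)
  then show ?thesis
    by cases (simp_all add: character_def omega_sq, simp_all add: omega_def complex_eq_iff)
qed

lemma sum_character_powers:
  "w \<in> weights \<Longrightarrow> (\<Sum>k<6. character w ^ k) = (if w = (0, 0) then 6 else 0)"
  by (simp add: sum_gp_strict character_eq_1_iff character_pow_6)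

text \<open>Averaging over the orbit of g projects onto the component of trivial character.\<close>
lemma weight_decomposition_invariant:
  assumes F: "weight_decomposition F f" and inv: "\<forall>p\<in>V. f (gmap p) = f p" and "p \<in> V"
  shows "f p = F (0, 0) p"
proof -
  have orbit: "f ((gmap ^^ k) p) = f p" for k
    by (induction k) (use inv funpow_gmap_in_V[OF \<open>p \<in> V\<close>] in auto)
  have "6 * f p = (\<Sum>k<6. f ((gmap ^^ k) p))"
    by (simp add: orbit)
  also have "\<dots> = (\<Sum>k<6. \<Sum>w\<in>weights. character w ^ k * F w p)"
    using F \<open>p \<in> V\<close> R_span_weight_funpow_gmap[of "F w" "fst w" "snd w" for w]
    unfolding weight_decomposition_def by simp
  also have "\<dots> = (\<Sum>w\<in>weights. (\<Sum>k<6. character w ^ k) * F w p)"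
    by (simp add: sum_distrib_right sum.swap[of _ "{..<6::nat}"])
  also have "\<dots> = (\<Sum>w\<in>weights. if w = (0, 0) then 6 * F w p else 0)"
    by (intro sum.cong refl) (simp add: sum_character_powers)
  also have "\<dots> = 6 * F (0, 0) p"
    by (simp add: finite_weights weights_def)
  finally show ?thesis by simp
qed

theorem lemma2p2:
  shows "\<forall>f \<in> poly_funs.
           (\<forall>p \<in> V. f (gmap p) = f p) \<longleftrightarrow> (\<exists>h \<in> gen_alg R_gens. \<forall>p \<in> V. f p = h p)"
proof (rule ballI, rule iffI)
  fix f assume "f \<in> poly_funs" and inv: "\<forall>p \<in> V. f (gmap p) = f p"
  then obtain F where F: "weight_decomposition F f"
    using poly_funs_weight_decomposition by blast
  then have "F (0, 0) \<in> R_span (weight_basis 0 0)"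
    unfolding weight_decomposition_def weights_def by auto
  then have "F (0, 0) \<in> R_on_V"
    using R_span_one by (simp add: weight_basis_0_0)
  then obtain h where "h \<in> gen_alg R_gens" "\<forall>p\<in>V. F (0, 0) p = h p"
    unfolding R_on_V_def by blast
  then show "\<exists>h \<in> gen_alg R_gens. \<forall>p \<in> V. f p = h p"
    using weight_decomposition_invariant[OF F inv] by auto
next
  fix f assume "\<exists>h \<in> gen_alg R_gens. \<forall>p \<in> V. f p = h p"
  then have "f \<in> R_on_V" unfolding R_on_V_def by blast
  then show "\<forall>p \<in> V. f (gmap p) = f p" using R_on_V_gmap_invariant by blast
qed

end
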